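(* Let $G$ be a digraph and $n\ge 1$. If $G$ is congruence $n$-permutable then $G^{\bot\top}$ is congruence $(n+2)$-permutable. If $G$ is nondismantlable and $G^{\bot\top}$ is congruence $(n+2)$-permutable, then $G$ is congruence $n$-permutable.
   Context: Digraphs are finite and loopless. For $G=(V,E)$: $G^\bot$ is the digraph on $V\cup\{\bot\}$ with edges $E\cup\{(\bot,v):v\in V\}$; $G^\top$ is the digraph on $V\cup\{\top\}$ with edges $E\cup\{(v,\top):v\in V\}$; $G^{\bot\top}=(G^\bot)^\top$. For a vertex $x$, $x^+=\{v:(x,v)\in E\}$ and $x^-=\{v:(v,x)\in E\}$. $G$ is nondismantlable if for all $v,w\in V$, $v^+\subseteq w^+$ and $v^-\subseteq w^-$ imply $v=w$. A polymorphism is a map $f:V^k\to V$ with $(f(a_1,\dots,a_k),f(b_1,\dots,b_k))\in E$ whenever all $(a_i,b_i)\in E$. A digraph is congruence $n$-permutable if it has ternary polymorphisms $p_0,\dots,p_n$ with $p_0(x,y,z)=x$, $p_i(x,x,y)=p_{i+1}(x,y,y)$ for $0\le i<n$, and $p_n(x,y,z)=z$, for all vertices $x,y,z$; congruence $1$-permutable means the equation $x=y$ holds, i.e. the digraph has one vertex. *)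

theory Defs
  imports Main
begin

type_synonym 'a digraph = "'a set \<times> ('a \<times> 'a) set"

definition is_digraph :: "'a digraph \<Rightarrow> bool" where
  "is_digraph G \<longleftrightarrow> finite (fst G) \<and> snd G \<subseteq> fst G \<times> fst G
     \<and> (\<forall>v. (v, v) \<notin> snd G)"

definition add_bot :: "'a digraph \<Rightarrow> 'a option digraph" where
  "add_bot G = (insert None (Some ` fst G),
     {(Some a, Some b) | a b. (a, b) \<in> snd G} \<union> {(None, Some v) | v. v \<in> fst G})"

definition add_top :: "'a digraph \<Rightarrow> 'a option digraph" where
  "add_top G = (insert None (Some ` fst G),
     {(Some a, Some b) | a b. (a, b) \<in> snd G} \<union> {(Some v, None) | v. v \<in> fst G})"

definition add_bot_top :: "'a digraph \<Rightarrow> 'a option option digraph" where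
  "add_bot_top G = add_top (add_bot G)"

definition out_nbrs :: "'a digraph \<Rightarrow> 'a \<Rightarrow> 'a set" where
  "out_nbrs G x = {v. (x, v) \<in> snd G}"

definition in_nbrs :: "'a digraph \<Rightarrow> 'a \<Rightarrow> 'a set" where
  "in_nbrs G x = {v. (v, x) \<in> snd G}"

definition nondismantlable :: "'a digraph \<Rightarrow> bool" where
  "nondismantlable G \<longleftrightarrow> (\<forall>v\<in>fst G. \<forall>w\<in>fst G.
     out_nbrs G v \<subseteq> out_nbrs G w \<and> in_nbrs G v \<subseteq> in_nbrs G w \<longrightarrow> v = w)"

definition ternary_polymorphism :: "'a digraph \<Rightarrow> ('a \<Rightarrow> 'a \<Rightarrow> 'a \<Rightarrow> 'a) \<Rightarrow> bool" where
  "ternary_polymorphism G f \<longleftrightarrow>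
     (\<forall>x\<in>fst G. \<forall>y\<in>fst G. \<forall>z\<in>fst G. f x y z \<in> fst G) \<and>
     (\<forall>a1 a2 a3 b1 b2 b3. (a1, b1) \<in> snd G \<and> (a2, b2) \<in> snd G \<and> (a3, b3) \<in> snd G
        \<longrightarrow> (f a1 a2 a3, f b1 b2 b3) \<in> snd G)"

definition cong_n_permutable :: "'a digraph \<Rightarrow> nat \<Rightarrow> bool" where
  "cong_n_permutable G n \<longleftrightarrow> (\<exists>p :: nat \<Rightarrow> 'a \<Rightarrow> 'a \<Rightarrow> 'a \<Rightarrow> 'a.
     (\<forall>i\<le>n. ternary_polymorphism G (p i)) \<and>
     (\<forall>x\<in>fst G. \<forall>y\<in>fst G. \<forall>z\<in>fst G.
        p 0 x y z = x \<and> p n x y z = z \<and>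
        (\<forall>i<n. p i x x y = p (Suc i) x y y)))"

end

theory Submission
  imports Defs
begin

text \<open>
  A Hagemann-Mitschke chain p_0, ..., p_n for G extends to G^bot-top: on triples of old vertices
  use p_i, and elsewhere answer bottom if bottom is an argument and top otherwise, which respects
  edges because bottom has no in-neighbours and top no out-neighbours. This extension breaks the
  identities q(x,y,y) = x and q(x,x,y) = y at bottom and top, so two absorbing terms are added at
  the ends (distinct terms since n >= 1), giving a chain of length n + 2.

  Conversely, a chain q_0, ..., q_(n+2) for G^bot-top maps triples of old vertices to old vertices
  (their images lie strictly between bottom and top), so q_1, ..., q_(n+1) restrict to
  polymorphisms of G. Since q_1(u,v,v) = u for all vertices u, v, taking v to be top (resp. bottom)
  shows that q_1(x,y,z) has all out-neighbours (resp. in-neighbours) of x, so nondismantlability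
  forces q_1(x,y,z) = x; dually q_(n+1)(x,y,z) = z.

  The new vertices are encoded as bottom = Some None and top = None, an old vertex v as
  Some (Some v).
\<close>

definition hm_chain :: "'a digraph \<Rightarrow> nat \<Rightarrow> (nat \<Rightarrow> 'a \<Rightarrow> 'a \<Rightarrow> 'a \<Rightarrow> 'a) \<Rightarrow> bool" where
  "hm_chain G n p \<longleftrightarrow> (\<forall>i\<le>n. ternary_polymorphism G (p i)) \<and>
     (\<forall>x\<in>fst G. \<forall>y\<in>fst G. \<forall>z\<in>fst G.
        p 0 x y z = x \<and> p n x y z = z \<and> (\<forall>i<n. p i x x y = p (Suc i) x y y))"

lemma cong_n_permutable_iff_hm_chain: "cong_n_permutable G n \<longleftrightarrow> (\<exists>p. hm_chain G n p)"
  by (simp add: cong_n_permutable_def hm_chain_def)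

lemma hm_chain_idempotent:
  assumes "hm_chain G n p" "i \<le> n" "x \<in> fst G"
  shows "p i x x x = x"
  using assms(2)
proof (induction i)
  case 0
  then show ?case using assms by (simp add: hm_chain_def)
next
  case (Suc i)
  then show ?case using assms by (simp add: hm_chain_def)
qed

lemma ternary_polymorphismI:
  assumes "\<And>x y z. x \<in> fst G \<Longrightarrow> y \<in> fst G \<Longrightarrow> z \<in> fst G \<Longrightarrow> f x y z \<in> fst G"
    and "\<And>a1 a2 a3 b1 b2 b3. (a1, b1) \<in> snd G \<Longrightarrow> (a2, b2) \<in> snd G \<Longrightarrow> (a3, b3) \<in> snd G
      \<Longrightarrow> (f a1 a2 a3, f b1 b2 b3) \<in> snd G"
  shows "ternary_polymorphism G f"
  using assms by (simp add: ternary_polymorphism_def)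

lemma ternary_polymorphism_closed:
  "ternary_polymorphism G f \<Longrightarrow> x \<in> fst G \<Longrightarrow> y \<in> fst G \<Longrightarrow> z \<in> fst G \<Longrightarrow> f x y z \<in> fst G"
  by (simp add: ternary_polymorphism_def)

lemma ternary_polymorphism_edge:
  "ternary_polymorphism G f \<Longrightarrow> (a1, b1) \<in> snd G \<Longrightarrow> (a2, b2) \<in> snd G \<Longrightarrow> (a3, b3) \<in> snd G
    \<Longrightarrow> (f a1 a2 a3, f b1 b2 b3) \<in> snd G"
  by (simp add: ternary_polymorphism_def)

lemma ternary_polymorphism_reverse:
  "ternary_polymorphism G f \<Longrightarrow> ternary_polymorphism G (\<lambda>x y z. f z y x)"
  by (simp add: ternary_polymorphism_def)

lemma add_bot_top_vertices [simp]:
  "None \<in> fst (add_bot_top G)"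
  "Some None \<in> fst (add_bot_top G)"
  "Some (Some v) \<in> fst (add_bot_top G) \<longleftrightarrow> v \<in> fst G"
  by (auto simp: add_bot_top_def add_top_def add_bot_def)

lemma add_bot_top_vertexE:
  assumes "x \<in> fst (add_bot_top G)"
  obtains "x = None" | "x = Some None" | v where "v \<in> fst G" "x = Some (Some v)"
  using assms by (auto simp: add_bot_top_def add_top_def add_bot_def)

lemma add_bot_top_edges [simp]:
  "(Some (Some a), Some (Some b)) \<in> snd (add_bot_top G) \<longleftrightarrow> (a, b) \<in> snd G"
  "(Some None, Some (Some b)) \<in> snd (add_bot_top G) \<longleftrightarrow> b \<in> fst G"
  "(Some (Some a), None) \<in> snd (add_bot_top G) \<longleftrightarrow> a \<in> fst G"
  "(Some None, None) \<in> snd (add_bot_top G)"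
  "(None, x) \<notin> snd (add_bot_top G)"
  "(x, Some None) \<notin> snd (add_bot_top G)"
  by (auto simp: add_bot_top_def add_top_def add_bot_def)

lemma add_bot_top_edgeE:
  assumes "is_digraph G" "(x, y) \<in> snd (add_bot_top G)"
  obtains a b where "(a, b) \<in> snd G" "a \<in> fst G" "b \<in> fst G" "x = Some (Some a)" "y = Some (Some b)"
  | b where "b \<in> fst G" "x = Some None" "y = Some (Some b)"
  | a where "a \<in> fst G" "x = Some (Some a)" "y = None"
  | "x = Some None" "y = None"
  using assms by (auto simp: is_digraph_def add_bot_top_def add_top_def add_bot_def)

definition extend_bt :: "('a \<Rightarrow> 'a \<Rightarrow> 'a \<Rightarrow> 'a)
    \<Rightarrow> 'a option option \<Rightarrow> 'a option option \<Rightarrow> 'a option option \<Rightarrow> 'a option option" where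
  "extend_bt f x y z = (case (x, y, z) of
     (Some (Some a), Some (Some b), Some (Some c)) \<Rightarrow> Some (Some (f a b c))
   | _ \<Rightarrow> if Some None \<in> {x, y, z} then Some None else None)"

lemma extend_bt_simps [simp]:
  "extend_bt f (Some (Some a)) (Some (Some b)) (Some (Some c)) = Some (Some (f a b c))"
  "Some None \<in> {x, y, z} \<Longrightarrow> extend_bt f x y z = Some None"
  "Some None \<notin> {x, y, z} \<Longrightarrow> None \<in> {x, y, z} \<Longrightarrow> extend_bt f x y z = None"
  by (auto simp: extend_bt_def split: option.split)

lemma extend_bt_reverse: "extend_bt f x y z = extend_bt (\<lambda>a b c. f c b a) z y x"
  by (auto simp: extend_bt_def split: option.split)

lemma ternary_polymorphism_extend_bt:
  assumes dg: "is_digraph G" and f: "ternary_polymorphism G f"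
  shows "ternary_polymorphism (add_bot_top G) (extend_bt f)"
proof (rule ternary_polymorphismI)
  fix x y z assume "x \<in> fst (add_bot_top G)" "y \<in> fst (add_bot_top G)" "z \<in> fst (add_bot_top G)"
  then show "extend_bt f x y z \<in> fst (add_bot_top G)"
    by (elim add_bot_top_vertexE) (simp_all add: ternary_polymorphism_closed[OF f])
next
  fix a1 a2 a3 b1 b2 b3
  assume e: "(a1, b1) \<in> snd (add_bot_top G)" "(a2, b2) \<in> snd (add_bot_top G)"
    "(a3, b3) \<in> snd (add_bot_top G)"
  show "(extend_bt f a1 a2 a3, extend_bt f b1 b2 b3) \<in> snd (add_bot_top G)"
    by (cases rule: add_bot_top_edgeE[OF dg e(1)]; cases rule: add_bot_top_edgeE[OF dg e(2)];
        cases rule: add_bot_top_edgeE[OF dg e(3)])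
      (simp_all add: ternary_polymorphism_closed[OF f] ternary_polymorphism_edge[OF f])
qed

lemma ternary_polymorphism_extend_bt_absorb_left:
  assumes dg: "is_digraph G" and proj: "\<forall>a\<in>fst G. \<forall>b\<in>fst G. \<forall>c\<in>fst G. f a b c = a"
  shows "ternary_polymorphism (add_bot_top G) (\<lambda>x y z. if y = z then x else extend_bt f x y z)"
proof -
  have f: "f a b c = a" if "a \<in> fst G" "b \<in> fst G" "c \<in> fst G" for a b c
    using proj that by blast
  show ?thesis
  proof (rule ternary_polymorphismI)
    fix x y z assume "x \<in> fst (add_bot_top G)" "y \<in> fst (add_bot_top G)" "z \<in> fst (add_bot_top G)"
    then show "(if y = z then x else extend_bt f x y z) \<in> fst (add_bot_top G)"
      by (elim add_bot_top_vertexE) (simp_all add: f)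
  next
    fix a1 a2 a3 b1 b2 b3
    assume e: "(a1, b1) \<in> snd (add_bot_top G)" "(a2, b2) \<in> snd (add_bot_top G)"
      "(a3, b3) \<in> snd (add_bot_top G)"
    show "(if a2 = a3 then a1 else extend_bt f a1 a2 a3, if b2 = b3 then b1 else extend_bt f b1 b2 b3)
        \<in> snd (add_bot_top G)"
      by (cases rule: add_bot_top_edgeE[OF dg e(1)]; cases rule: add_bot_top_edgeE[OF dg e(2)];
          cases rule: add_bot_top_edgeE[OF dg e(3)]) (simp_all add: f)
  qed
qed

lemma ternary_polymorphism_extend_bt_absorb_right:
  assumes dg: "is_digraph G" and proj: "\<forall>a\<in>fst G. \<forall>b\<in>fst G. \<forall>c\<in>fst G. f a b c = c"
  shows "ternary_polymorphism (add_bot_top G) (\<lambda>x y z. if x = y then z else extend_bt f x y z)"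
proof -
  let ?g = "\<lambda>x y z. if y = z then x else extend_bt (\<lambda>a b c. f c b a) x y z"
  have "ternary_polymorphism (add_bot_top G) ?g"
    using ternary_polymorphism_extend_bt_absorb_left[OF dg, of "\<lambda>a b c. f c b a"] proj by simp
  moreover have "(\<lambda>x y z. if x = y then z else extend_bt f x y z) = (\<lambda>x y z. ?g z y x)"
  proof (intro ext)
    fix x y z
    show "(if x = y then z else extend_bt f x y z) = ?g z y x"
      using extend_bt_reverse[of f x y z] by auto
  qed
  ultimately show ?thesis
    using ternary_polymorphism_reverse[of "add_bot_top G" ?g] by simp
qed

definition extend_bt_chain :: "nat \<Rightarrow> (nat \<Rightarrow> 'a \<Rightarrow> 'a \<Rightarrow> 'a \<Rightarrow> 'a) \<Rightarrow> nat
    \<Rightarrow> 'a option option \<Rightarrow> 'a option option \<Rightarrow> 'a option option \<Rightarrow> 'a option option" where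
  "extend_bt_chain n p i x y z =
     (if i = 0 then x
      else if i = n + 2 then z
      else if i = 1 \<and> y = z then x
      else if i = n + 1 \<and> x = y then z
      else extend_bt (p (i - 1)) x y z)"

lemma hm_chain_extend_bt_chain:
  assumes dg: "is_digraph G" and n: "n \<ge> 1" and p: "hm_chain G n p"
  shows "hm_chain (add_bot_top G) (n + 2) (extend_bt_chain n p)"
  unfolding hm_chain_def
proof (intro conjI allI impI ballI)
  have poly: "ternary_polymorphism G (p i)" if "i \<le> n" for i
    using p that by (simp add: hm_chain_def)
  have first: "\<forall>a\<in>fst G. \<forall>b\<in>fst G. \<forall>c\<in>fst G. p 0 a b c = a"
    and last: "\<forall>a\<in>fst G. \<forall>b\<in>fst G. \<forall>c\<in>fst G. p n a b c = c"
    using p by (simp_all add: hm_chain_def)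
  fix i assume "i \<le> n + 2"
  then consider "i = 0 \<or> i = n + 2" | "i = 1" | "i = n + 1" | "2 \<le> i" "i \<le> n"
    by linarith
  then show "ternary_polymorphism (add_bot_top G) (extend_bt_chain n p i)"
  proof cases
    case 1
    then show ?thesis by (auto simp: extend_bt_chain_def ternary_polymorphism_def)
  next
    case 2
    with n have "extend_bt_chain n p i = (\<lambda>x y z. if y = z then x else extend_bt (p 0) x y z)"
      by (auto simp: extend_bt_chain_def fun_eq_iff)
    then show ?thesis
      using ternary_polymorphism_extend_bt_absorb_left[OF dg first] by simp
  next
    case 3
    with n have "extend_bt_chain n p i = (\<lambda>x y z. if x = y then z else extend_bt (p n) x y z)"
      by (auto simp: extend_bt_chain_def fun_eq_iff)
    then show ?thesis
      using ternary_polymorphism_extend_bt_absorb_right[OF dg last] by simp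
  next
    case 4
    then show ?thesis
      using ternary_polymorphism_extend_bt[OF dg poly[of "i - 1"]]
      by (simp add: extend_bt_chain_def[abs_def])
  qed
next
  fix x y z
  assume x: "x \<in> fst (add_bot_top G)" and y: "y \<in> fst (add_bot_top G)"
  show "extend_bt_chain n p 0 x y z = x" "extend_bt_chain n p (n + 2) x y z = z"
    by (simp_all add: extend_bt_chain_def)
  have ends: "p 0 a b c = a" "p n a b c = c" if "a \<in> fst G" "b \<in> fst G" "c \<in> fst G" for a b c
    using p that by (simp_all add: hm_chain_def)
  fix i assume "i < n + 2"
  then consider "i = 0" | "i = n + 1" | "1 \<le> i" "i \<le> n"
    by linarith
  then show "extend_bt_chain n p i x x y = extend_bt_chain n p (Suc i) x y y"
  proof cases
    case 3
    then obtain j where j: "i = Suc j" "j < n"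
      by (cases i) auto
    have step: "p j a a b = p (Suc j) a b b" if "a \<in> fst G" "b \<in> fst G" for a b
      using p that j by (simp add: hm_chain_def)
    have idem: "p k a a a = a" if "k \<le> n" "a \<in> fst G" for k a
      using hm_chain_idempotent[OF p] that .
    show ?thesis
      using x y j by (elim add_bot_top_vertexE) (simp_all add: extend_bt_chain_def step idem)
  qed (use x y n in \<open>elim add_bot_top_vertexE; simp add: extend_bt_chain_def ends\<close>)+
qed

definition restrict_bt :: "('a option option \<Rightarrow> 'a option option \<Rightarrow> 'a option option \<Rightarrow> 'a option option)
    \<Rightarrow> 'a \<Rightarrow> 'a \<Rightarrow> 'a \<Rightarrow> 'a" where
  "restrict_bt f a b c = the (the (f (Some (Some a)) (Some (Some b)) (Some (Some c))))"

lemma add_bot_top_polymorphism_restrict_bt: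
  assumes f: "ternary_polymorphism (add_bot_top G) f"
    and bot: "f (Some None) (Some None) (Some None) = Some None" and top: "f None None None = None"
    and abc: "a \<in> fst G" "b \<in> fst G" "c \<in> fst G"
  shows "f (Some (Some a)) (Some (Some b)) (Some (Some c)) = Some (Some (restrict_bt f a b c))"
    and "restrict_bt f a b c \<in> fst G"
proof -
  let ?w = "f (Some (Some a)) (Some (Some b)) (Some (Some c))"
  have "(Some None, ?w) \<in> snd (add_bot_top G)" "(?w, None) \<in> snd (add_bot_top G)"
    using ternary_polymorphism_edge[OF f, of "Some None" _ "Some None" _ "Some None"]
      ternary_polymorphism_edge[OF f, of _ None _ None _ None] bot top abc
    by simp_all
  then have "\<exists>v\<in>fst G. ?w = Some (Some v)"
    by (metis add_bot_top_edges(2,5,6) option.exhaust)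
  then show "?w = Some (Some (restrict_bt f a b c))" "restrict_bt f a b c \<in> fst G"
    by (auto simp: restrict_bt_def)
qed

lemma ternary_polymorphism_restrict_bt:
  assumes dg: "is_digraph G" and f: "ternary_polymorphism (add_bot_top G) f"
    and bot: "f (Some None) (Some None) (Some None) = Some None" and top: "f None None None = None"
  shows "ternary_polymorphism G (restrict_bt f)"
proof (rule ternary_polymorphismI)
  fix a b c assume "a \<in> fst G" "b \<in> fst G" "c \<in> fst G"
  then show "restrict_bt f a b c \<in> fst G"
    by (rule add_bot_top_polymorphism_restrict_bt(2)[OF f bot top])
next
  fix a1 a2 a3 b1 b2 b3
  assume e: "(a1, b1) \<in> snd G" "(a2, b2) \<in> snd G" "(a3, b3) \<in> snd G"
  then have "a1 \<in> fst G" "a2 \<in> fst G" "a3 \<in> fst G" "b1 \<in> fst G" "b2 \<in> fst G" "b3 \<in> fst G"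
    using dg by (auto simp: is_digraph_def)
  moreover have "(f (Some (Some a1)) (Some (Some a2)) (Some (Some a3)),
      f (Some (Some b1)) (Some (Some b2)) (Some (Some b3))) \<in> snd (add_bot_top G)"
    using ternary_polymorphism_edge[OF f] e by simp
  ultimately show "(restrict_bt f a1 a2 a3, restrict_bt f b1 b2 b3) \<in> snd G"
    by (simp add: add_bot_top_polymorphism_restrict_bt(1)[OF f bot top])
qed

lemma restrict_bt_eq_first:
  assumes dg: "is_digraph G" and nd: "nondismantlable G"
    and f: "ternary_polymorphism (add_bot_top G) f"
    and absorb: "\<forall>u\<in>fst (add_bot_top G). \<forall>v\<in>fst (add_bot_top G). f u v v = u"
    and abc: "a \<in> fst G" "b \<in> fst G" "c \<in> fst G"
  shows "restrict_bt f a b c = a"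
proof -
  have absorb_top: "f u None None = u" and absorb_bot: "f u (Some None) (Some None) = u"
    if "u \<in> fst (add_bot_top G)" for u
    using absorb that by simp_all
  let ?w = "restrict_bt f a b c"
  have w: "f (Some (Some a)) (Some (Some b)) (Some (Some c)) = Some (Some ?w)" "?w \<in> fst G"
    using add_bot_top_polymorphism_restrict_bt[OF f absorb_bot absorb_top abc] by simp_all
  have edges: "snd G \<subseteq> fst G \<times> fst G"
    using dg by (simp add: is_digraph_def)
  have "out_nbrs G a \<subseteq> out_nbrs G ?w"
  proof
    fix a' assume "a' \<in> out_nbrs G a"
    then have "(a, a') \<in> snd G" "a' \<in> fst G"
      using edges by (auto simp: out_nbrs_def)
    then have "(f (Some (Some a)) (Some (Some b)) (Some (Some c)), f (Some (Some a')) None None)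
        \<in> snd (add_bot_top G)"
      using abc by (intro ternary_polymorphism_edge[OF f]) simp_all
    then show "a' \<in> out_nbrs G ?w"
      using w absorb_top[of "Some (Some a')"] \<open>a' \<in> fst G\<close> by (simp add: out_nbrs_def)
  qed
  moreover have "in_nbrs G a \<subseteq> in_nbrs G ?w"
  proof
    fix a' assume "a' \<in> in_nbrs G a"
    then have "(a', a) \<in> snd G" "a' \<in> fst G"
      using edges by (auto simp: in_nbrs_def)
    then have "(f (Some (Some a')) (Some None) (Some None), f (Some (Some a)) (Some (Some b)) (Some (Some c)))
        \<in> snd (add_bot_top G)"
      using abc by (intro ternary_polymorphism_edge[OF f]) simp_all
    then show "a' \<in> in_nbrs G ?w"
      using w absorb_bot[of "Some (Some a')"] \<open>a' \<in> fst G\<close> by (simp add: in_nbrs_def)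
  qed
  ultimately show ?thesis
    using nd abc(1) w(2) unfolding nondismantlable_def by (metis (no_types))
qed

lemma hm_chain_restrict_bt:
  assumes dg: "is_digraph G" and nd: "nondismantlable G"
    and q: "hm_chain (add_bot_top G) (n + 2) q"
  shows "hm_chain G n (\<lambda>i. restrict_bt (q (Suc i)))"
proof -
  have poly: "ternary_polymorphism (add_bot_top G) (q i)" if "i \<le> n + 2" for i
    using q that by (simp add: hm_chain_def)
  have bot: "q i (Some None) (Some None) (Some None) = Some None"
    and top: "q i None None None = None" if "i \<le> n + 2" for i
    using hm_chain_idempotent[OF q that] by simp_all
  have chain: "q i u u v = q (Suc i) u v v"
    if "i < n + 2" "u \<in> fst (add_bot_top G)" "v \<in> fst (add_bot_top G)" for i u v
    using q that by (simp add: hm_chain_def)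
  have ends: "q 0 u v w = u" "q (n + 2) u v w = w"
    if "u \<in> fst (add_bot_top G)" "v \<in> fst (add_bot_top G)" "w \<in> fst (add_bot_top G)" for u v w
    using q that by (simp_all add: hm_chain_def)
  have restrict: "q (Suc i) (Some (Some a)) (Some (Some b)) (Some (Some c))
      = Some (Some (restrict_bt (q (Suc i)) a b c))"
    if "i \<le> n" "a \<in> fst G" "b \<in> fst G" "c \<in> fst G" for i a b c
    using add_bot_top_polymorphism_restrict_bt(1)[OF poly bot top] that by simp
  have first: "restrict_bt (q 1) x y z = x" if xyz: "x \<in> fst G" "y \<in> fst G" "z \<in> fst G" for x y z
  proof (rule restrict_bt_eq_first[OF dg nd poly _ xyz])
    show "\<forall>u\<in>fst (add_bot_top G). \<forall>v\<in>fst (add_bot_top G). q 1 u v v = u"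
      using chain[of 0] ends by simp
  qed simp
  have last: "restrict_bt (q (Suc n)) x y z = z" if xyz: "x \<in> fst G" "y \<in> fst G" "z \<in> fst G" for x y z
  proof -
    have "restrict_bt (\<lambda>u v w. q (Suc n) w v u) z y x = z"
    proof (rule restrict_bt_eq_first[OF dg nd ternary_polymorphism_reverse[OF poly] _ xyz(3,2,1)])
      show "\<forall>u\<in>fst (add_bot_top G). \<forall>v\<in>fst (add_bot_top G). q (Suc n) v v u = u"
        using chain[of "Suc n"] ends by simp
    qed simp
    then show ?thesis by (simp add: restrict_bt_def)
  qed
  have middle: "restrict_bt (q (Suc i)) x x y = restrict_bt (q (Suc (Suc i))) x y y"
    if "i < n" "x \<in> fst G" "y \<in> fst G" for i x y
    using chain[of "Suc i" "Some (Some x)" "Some (Some y)"] restrict[of i x x y] restrict[of "Suc i" x y y] that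
    by simp
  show ?thesis
    unfolding hm_chain_def
    using ternary_polymorphism_restrict_bt[OF dg poly bot top] first last middle by simp
qed

theorem theorem5p3:
  fixes G :: "'a digraph" and n :: nat
  assumes "is_digraph G" and "n \<ge> 1"
  shows "(cong_n_permutable G n \<longrightarrow> cong_n_permutable (add_bot_top G) (n + 2))
    \<and> (nondismantlable G \<and> cong_n_permutable (add_bot_top G) (n + 2)
         \<longrightarrow> cong_n_permutable G n)"
proof (intro conjI impI)
  assume "cong_n_permutable G n"
  then obtain p where "hm_chain G n p"
    unfolding cong_n_permutable_iff_hm_chain ..
  then have "hm_chain (add_bot_top G) (n + 2) (extend_bt_chain n p)"
    by (rule hm_chain_extend_bt_chain[OF assms])
  then show "cong_n_permutable (add_bot_top G) (n + 2)"
    unfolding cong_n_permutable_iff_hm_chain by blast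
next
  assume "nondismantlable G \<and> cong_n_permutable (add_bot_top G) (n + 2)"
  then obtain q where "nondismantlable G" "hm_chain (add_bot_top G) (n + 2) q"
    unfolding cong_n_permutable_iff_hm_chain by blast
  then have "hm_chain G n (\<lambda>i. restrict_bt (q (Suc i)))"
    by (rule hm_chain_restrict_bt[OF assms(1)])
  then show "cong_n_permutable G n"
    unfolding cong_n_permutable_iff_hm_chain by blast
qed

end
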